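(* Let $n\ge1$, $X=\{1,\dots,n\}$, $\mathcal{A}$ the algebra of all functions $X\to\mathbb{R}$ with pointwise operations, $\sigma:X\to X$ a bijection and $\tilde{\sigma}(f)=f\circ\sigma^{-1}$. The center of the skew power series ring $\mathcal{A}[[x;\tilde{\sigma}]]$ is $$Z(\mathcal{A}[[x;\tilde{\sigma}]])=\Big\{\sum_{n=0}^{\infty} f_nx^n : f_n\in\mathcal{A},\ f_n=0\text{ on } Sep^n(X)\text{ and }\tilde{\sigma}(f_n)=f_n\text{ for all } n\ge0\Big\}.$$
   Context: The skew power series ring $\mathcal{A}[[x;\tilde{\sigma}]]$ is the set of formal series $\sum_{n=0}^\infty f_nx^n$, $f_n\in\mathcal{A}$, with coefficientwise addition and multiplication $\big(\sum_n f_nx^n\big)\big(\sum_n g_nx^n\big)=\sum_{n}\big(\sum_{k=0}^n f_k\,\tilde{\sigma}^k(g_{n-k})\big)x^n$ (so $xf=\tilde{\sigma}(f)x$). For an integer $n$, $Sep^n(X)=\{p\in X:\sigma^n(p)\neq p\}$ (so $Sep^0(X)=\emptyset$). *)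

theory Defs
  imports Complex_Main
begin

definition Xset :: "nat \<Rightarrow> nat set" where
  "Xset n = {1..n}"

text \<open>The algebra of all real functions on X, represented as functions on nat
  that vanish outside X (extensional convention).\<close>
definition Alg :: "nat \<Rightarrow> (nat \<Rightarrow> real) set" where
  "Alg n = {f. \<forall>p. p \<notin> Xset n \<longrightarrow> f p = 0}"

definition sig_tilde :: "nat \<Rightarrow> (nat \<Rightarrow> nat) \<Rightarrow> (nat \<Rightarrow> real) \<Rightarrow> (nat \<Rightarrow> real)" where
  "sig_tilde n \<sigma> f = (\<lambda>p. if p \<in> Xset n then f (inv_into (Xset n) \<sigma> p) else 0)"

definition SkewPS :: "nat \<Rightarrow> (nat \<Rightarrow> nat \<Rightarrow> real) set" where
  "SkewPS n = {F. \<forall>k. F k \<in> Alg n}"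

definition skew_mult ::
  "nat \<Rightarrow> (nat \<Rightarrow> nat) \<Rightarrow> (nat \<Rightarrow> nat \<Rightarrow> real) \<Rightarrow> (nat \<Rightarrow> nat \<Rightarrow> real) \<Rightarrow> (nat \<Rightarrow> nat \<Rightarrow> real)" where
  "skew_mult n \<sigma> F G = (\<lambda>m p. \<Sum>k\<le>m. F k p * ((sig_tilde n \<sigma> ^^ k) (G (m - k))) p)"

definition skew_center :: "nat \<Rightarrow> (nat \<Rightarrow> nat) \<Rightarrow> (nat \<Rightarrow> nat \<Rightarrow> real) set" where
  "skew_center n \<sigma> = {F \<in> SkewPS n. \<forall>G \<in> SkewPS n. skew_mult n \<sigma> F G = skew_mult n \<sigma> G F}"

definition Sep :: "nat \<Rightarrow> (nat \<Rightarrow> nat) \<Rightarrow> nat \<Rightarrow> nat set" where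
  "Sep n \<sigma> k = {p \<in> Xset n. (\<sigma> ^^ k) p \<noteq> p}"

end

theory Submission
  imports Defs
begin

text \<open>
  Writing \<open>s\<close> for \<open>\<sigma>\<^sup>-\<^sup>1\<close>, the coefficient of \<open>x\<^sup>m\<close> in \<open>F G\<close> at a point \<open>p\<close> is
  \<open>\<Sum>i\<le>m. F\<^sub>i(p) G\<^sub>m\<^sub>-\<^sub>i(s\<^sup>i p)\<close>. If \<open>F\<close> is central, comparing \<open>F \<delta>\<^sub>r\<close> with \<open>\<delta>\<^sub>r F\<close> for the
  point mass \<open>\<delta>\<^sub>r\<close> at \<open>r = s\<^sup>k p \<noteq> p\<close> gives \<open>F\<^sub>k(p) = 0\<close> on \<open>Sep\<^sup>k\<close>, and comparing \<open>F x\<close> with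
  \<open>x F\<close> gives \<open>sig_tilde (F\<^sub>k) = F\<^sub>k\<close>. Conversely, under these two conditions both \<open>F G\<close> and
  \<open>G F\<close> have coefficients \<open>\<Sum>i\<le>m. F\<^sub>i(p) G\<^sub>m\<^sub>-\<^sub>i(p)\<close>, a commutative convolution.
\<close>

abbreviation sig_inv :: "nat \<Rightarrow> (nat \<Rightarrow> nat) \<Rightarrow> nat \<Rightarrow> nat" where
  "sig_inv n \<sigma> \<equiv> inv_into (Xset n) \<sigma>"

lemma funpow_inv_into_cancel:
  assumes "bij_betw f A A" "x \<in> A"
  shows "(f ^^ k) ((inv_into A f ^^ k) x) = x"
  using assms(2)
proof (induction k arbitrary: x)
  case 0
  then show ?case by simp
next
  case (Suc k)
  have "inv_into A f x \<in> A"
    using assms(1) Suc.prems by (metis bij_betw_def inv_into_into)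
  then have "(f ^^ k) ((inv_into A f ^^ k) (inv_into A f x)) = inv_into A f x"
    by (rule Suc.IH)
  then show ?case
    using assms(1) Suc.prems by (simp add: funpow_swap1 bij_betw_def f_inv_into_f)
qed

lemma funpow_inv_into_in:
  assumes "bij_betw f A A" "x \<in> A"
  shows "(inv_into A f ^^ k) x \<in> A"
  using bij_betw_funpow[OF bij_betw_inv_into[OF assms(1)]] assms(2) by (metis bij_betwE)

lemma funpow_inv_into_fixed_iff:
  assumes "bij_betw f A A" "x \<in> A"
  shows "(inv_into A f ^^ k) x = x \<longleftrightarrow> (f ^^ k) x = x"
proof -
  have inj: "inj_on (f ^^ k) A"
    using bij_betw_funpow[OF assms(1)] by (rule bij_betw_imp_inj_on)
  show ?thesis
    using funpow_inv_into_cancel[OF assms] funpow_inv_into_in[OF assms] inj_onD[OF inj] assms(2)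
    by metis
qed

lemma sig_tilde_funpow_apply:
  assumes "bij_betw \<sigma> (Xset n) (Xset n)" "p \<in> Xset n"
  shows "(sig_tilde n \<sigma> ^^ k) f p = f ((sig_inv n \<sigma> ^^ k) p)"
  using assms(2)
proof (induction k arbitrary: p f)
  case 0
  then show ?case by simp
next
  case (Suc k)
  have "(sig_tilde n \<sigma> ^^ Suc k) f p = (sig_tilde n \<sigma> ^^ k) (sig_tilde n \<sigma> f) p"
    by (simp add: funpow_Suc_right del: funpow.simps(2))
  also have "\<dots> = sig_tilde n \<sigma> f ((sig_inv n \<sigma> ^^ k) p)"
    by (rule Suc.IH[OF Suc.prems])
  also have "\<dots> = f ((sig_inv n \<sigma> ^^ Suc k) p)"
    using funpow_inv_into_in[OF assms(1) Suc.prems] by (simp add: sig_tilde_def)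
  finally show ?case .
qed

lemma sig_tilde_fixed_funpow_apply:
  assumes "bij_betw \<sigma> (Xset n) (Xset n)" "p \<in> Xset n" "sig_tilde n \<sigma> f = f"
  shows "f ((sig_inv n \<sigma> ^^ k) p) = f p"
proof -
  have "(sig_tilde n \<sigma> ^^ k) f = f"
    using assms(3) by (induction k) auto
  then show ?thesis
    using sig_tilde_funpow_apply[OF assms(1,2), of k f] by simp
qed

lemma skew_mult_apply:
  assumes "bij_betw \<sigma> (Xset n) (Xset n)" "p \<in> Xset n"
  shows "skew_mult n \<sigma> F G m p = (\<Sum>i\<le>m. F i p * G (m - i) ((sig_inv n \<sigma> ^^ i) p))"
  unfolding skew_mult_def using sig_tilde_funpow_apply[OF assms] by simp

definition skew_monom :: "nat \<Rightarrow> (nat \<Rightarrow> real) \<Rightarrow> nat \<Rightarrow> nat \<Rightarrow> real" where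
  "skew_monom k f = (\<lambda>j. if j = k then f else (\<lambda>_. 0))"

lemma skew_monom_in_SkewPS: "f \<in> Alg n \<Longrightarrow> skew_monom k f \<in> SkewPS n"
  by (simp add: skew_monom_def SkewPS_def Alg_def)

lemma skew_mult_monom_right:
  assumes "bij_betw \<sigma> (Xset n) (Xset n)" "p \<in> Xset n"
  shows "skew_mult n \<sigma> F (skew_monom k f) (j + k) p = F j p * f ((sig_inv n \<sigma> ^^ j) p)"
proof -
  have "skew_mult n \<sigma> F (skew_monom k f) (j + k) p
      = (\<Sum>i\<le>j + k. if i = j then F j p * f ((sig_inv n \<sigma> ^^ j) p) else 0)"
    unfolding skew_mult_apply[OF assms] by (rule sum.cong) (auto simp: skew_monom_def)
  then show ?thesis by simp
qed

lemma skew_mult_monom_left: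
  assumes "bij_betw \<sigma> (Xset n) (Xset n)" "p \<in> Xset n"
  shows "skew_mult n \<sigma> (skew_monom k f) F (j + k) p = f p * F j ((sig_inv n \<sigma> ^^ k) p)"
proof -
  have "skew_mult n \<sigma> (skew_monom k f) F (j + k) p
      = (\<Sum>i\<le>j + k. if i = k then f p * F j ((sig_inv n \<sigma> ^^ k) p) else 0)"
    unfolding skew_mult_apply[OF assms] by (rule sum.cong) (auto simp: skew_monom_def)
  then show ?thesis by simp
qed

lemma skew_center_coeff_vanishes_on_Sep:
  assumes "bij_betw \<sigma> (Xset n) (Xset n)" "F \<in> skew_center n \<sigma>" "p \<in> Sep n \<sigma> k"
  shows "F k p = 0"
proof -
  have p: "p \<in> Xset n" and moved: "(\<sigma> ^^ k) p \<noteq> p"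
    using assms(3) by (auto simp: Sep_def)
  define r where "r = (sig_inv n \<sigma> ^^ k) p"
  have "r \<in> Xset n"
    unfolding r_def using assms(1) p by (rule funpow_inv_into_in)
  let ?\<delta> = "skew_monom 0 (\<lambda>q. of_bool (q = r))"
  have \<delta>: "?\<delta> \<in> SkewPS n"
    using \<open>r \<in> Xset n\<close>
    by (intro skew_monom_in_SkewPS) (auto simp: Alg_def)
  have "r \<noteq> p"
    using funpow_inv_into_fixed_iff[OF assms(1) p] moved unfolding r_def by blast
  have "F k p = skew_mult n \<sigma> F ?\<delta> (k + 0) p"
    using skew_mult_monom_right[OF assms(1) p, of F 0 _ k] by (simp add: r_def)
  also have "\<dots> = skew_mult n \<sigma> ?\<delta> F (k + 0) p"
    using assms(2) \<delta> by (simp add: skew_center_def)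
  also have "\<dots> = 0"
    using skew_mult_monom_left[OF assms(1) p, of 0 _ F k] \<open>r \<noteq> p\<close> by simp
  finally show ?thesis .
qed

lemma skew_center_coeff_sig_tilde_fixed:
  assumes "bij_betw \<sigma> (Xset n) (Xset n)" "F \<in> skew_center n \<sigma>"
  shows "sig_tilde n \<sigma> (F k) = F k"
proof
  fix p
  show "sig_tilde n \<sigma> (F k) p = F k p"
  proof (cases "p \<in> Xset n")
    case False
    then show ?thesis
      using assms(2) by (simp add: sig_tilde_def skew_center_def SkewPS_def Alg_def)
  next
    case p: True
    let ?x = "skew_monom 1 (\<lambda>q. of_bool (q \<in> Xset n))"
    have x: "?x \<in> SkewPS n"
      by (intro skew_monom_in_SkewPS) (auto simp: Alg_def)
    have "F k p = skew_mult n \<sigma> F ?x (k + 1) p"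
      using skew_mult_monom_right[OF assms(1) p, of F 1 _ k] funpow_inv_into_in[OF assms(1) p]
      by simp
    also have "\<dots> = skew_mult n \<sigma> ?x F (k + 1) p"
      using assms(2) x by (simp add: skew_center_def)
    also have "\<dots> = sig_tilde n \<sigma> (F k) p"
      using skew_mult_monom_left[OF assms(1) p, of 1 _ F k] p by (simp add: sig_tilde_def)
    finally show ?thesis by simp
  qed
qed

lemma skew_mult_commute_if_coeffs_fixed:
  assumes "bij_betw \<sigma> (Xset n) (Xset n)" "F \<in> SkewPS n" "G \<in> SkewPS n"
    and vanish: "\<And>k p. p \<in> Sep n \<sigma> k \<Longrightarrow> F k p = 0"
    and fixed: "\<And>k. sig_tilde n \<sigma> (F k) = F k"
  shows "skew_mult n \<sigma> F G = skew_mult n \<sigma> G F"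
proof (intro ext)
  fix m p
  show "skew_mult n \<sigma> F G m p = skew_mult n \<sigma> G F m p"
  proof (cases "p \<in> Xset n")
    case False
    then show ?thesis
      using assms(2,3) by (simp add: skew_mult_def SkewPS_def Alg_def)
  next
    case p: True
    have F_supp: "F i p * g ((sig_inv n \<sigma> ^^ i) p) = F i p * g p" for i and g :: "nat \<Rightarrow> real"
    proof (cases "F i p = 0")
      case False
      then have "(\<sigma> ^^ i) p = p"
        using vanish p by (auto simp: Sep_def)
      then have "(sig_inv n \<sigma> ^^ i) p = p"
        using funpow_inv_into_fixed_iff[OF assms(1) p] by blast
      then show ?thesis by simp
    qed simp
    have "skew_mult n \<sigma> F G m p = (\<Sum>i\<le>m. G (m - i) p * F i p)"
      unfolding skew_mult_apply[OF assms(1) p] F_supp by (simp add: mult.commute)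
    also have "\<dots> = (\<Sum>i\<le>m. G i p * F (m - i) p)"
      using sum.atLeastAtMost_rev[of "\<lambda>i. G (m - i) p * F i p" 0 m]
      by (simp add: atLeast0AtMost)
    also have "\<dots> = skew_mult n \<sigma> G F m p"
      unfolding skew_mult_apply[OF assms(1) p]
      using sig_tilde_fixed_funpow_apply[OF assms(1) p fixed] by simp
    finally show ?thesis .
  qed
qed

theorem theorem11:
  fixes n :: nat and \<sigma> :: "nat \<Rightarrow> nat"
  assumes "n \<ge> 1"
    and "bij_betw \<sigma> (Xset n) (Xset n)"
  shows "skew_center n \<sigma> =
    {F \<in> SkewPS n. \<forall>k. (\<forall>p \<in> Sep n \<sigma> k. F k p = 0) \<and> sig_tilde n \<sigma> (F k) = F k}"
proof (intro equalityI subsetI)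
  fix F
  assume "F \<in> skew_center n \<sigma>"
  then show "F \<in> {F \<in> SkewPS n. \<forall>k. (\<forall>p \<in> Sep n \<sigma> k. F k p = 0) \<and> sig_tilde n \<sigma> (F k) = F k}"
    using skew_center_coeff_vanishes_on_Sep[OF assms(2)] skew_center_coeff_sig_tilde_fixed[OF assms(2)]
    by (auto simp: skew_center_def)
next
  fix F
  assume "F \<in> {F \<in> SkewPS n. \<forall>k. (\<forall>p \<in> Sep n \<sigma> k. F k p = 0) \<and> sig_tilde n \<sigma> (F k) = F k}"
  then show "F \<in> skew_center n \<sigma>"
    using skew_mult_commute_if_coeffs_fixed[OF assms(2)] by (auto simp: skew_center_def)
qed

end
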